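(* Let $\mathcal{H}_O\simeq\mathbb{C}^{d_O}$ and $\mathcal{H}_K\simeq\mathbb{C}^{d_K}$, let $H=\sum_{n=1}^{d_Od_K}\lambda_n^{\uparrow}|\xi_n\rangle\langle\xi_n|$ be a Hamiltonian on $\mathcal{H}_O\otimes\mathcal{H}_K$ with $\lambda_1^\uparrow\leqslant\dots\leqslant\lambda^\uparrow_{d_Od_K}$ and $\{|\xi_n\rangle\}$ an orthonormal eigenbasis, let $\beta\in(0,\infty)$ and $\rho(\beta)=e^{-\beta H}/\mathrm{tr}[e^{-\beta H}]=\sum_n p_n^{\downarrow}|\xi_n\rangle\langle\xi_n|$. Fix a unit vector $|\Psi\rangle\in\mathcal{H}_O$. Let $\mathcal{U}_{\mathrm{maj}}$ be the set of unitaries $U$ on $\mathcal{H}_O\otimes\mathcal{H}_K$ for which there is an orthonormal basis $\{|\phi_j\rangle\}_{j=1}^{d_K}$ of $\mathcal{H}_K$ with $U|\xi_n\rangle=|\Psi\rangle\otimes|\phi_n\rangle$ for all $n\in\{1,\dots,d_K\}$ (these unitaries maximise $\langle\Psi|\mathrm{tr}_K[U\rho(\beta)U^\dagger]|\Psi\rangle$). For a unitary $U$ define $\Delta Q(U)=\mathrm{tr}[H(U\rho(\beta)U^\dagger-\rho(\beta))]$ and the vector $\mathbf{q}^U\in\mathbb{R}^{d_Od_K}$ by $q_n^U=\sum_{m=1}^{d_Od_K}p_m^{\downarrow}|\langle\xi_n|U|\xi_m\rangle|^2$. Suppose $U^1\in\mathcal{U}_{\mathrm{maj}}$ satisfies $q_1^{U^1}\geqslant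 q_2^{U^1}\geqslant\dots\geqslant q^{U^1}_{d_Od_K}$ and $(\mathbf{q}^{U})^{\downarrow}\prec(\mathbf{q}^{U^1})^{\downarrow}$ for all $U\in\mathcal{U}_{\mathrm{maj}}$. Then $\Delta Q(U^1)\leqslant\Delta Q(U)$ for all $U\in\mathcal{U}_{\mathrm{maj}}$.
   Context: $\mathrm{tr}_K$ denotes the partial trace over $\mathcal{H}_K$. For $\mathbf{a}\in\mathbb{R}^N$, $\mathbf{a}^\downarrow$ is its non-increasing rearrangement, and $\mathbf{a}\prec\mathbf{b}$ means $\sum_{i=1}^k a_i^\downarrow\leqslant\sum_{i=1}^k b_i^\downarrow$ for all $k$ with equality at $k=N$. *)

theory Defs
  imports "Jordan_Normal_Form.Matrix"
begin

definition cinner :: "complex vec \<Rightarrow> complex vec \<Rightarrow> complex" where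
  "cinner x y = (\<Sum>i<dim_vec x. cnj (x $ i) * y $ i)"

definition adj :: "complex mat \<Rightarrow> complex mat" where
  "adj A = mat (dim_col A) (dim_row A) (\<lambda>(i,j). cnj (A $$ (j,i)))"

definition unitary :: "nat \<Rightarrow> complex mat \<Rightarrow> bool" where
  "unitary N U \<longleftrightarrow> U \<in> carrier_mat N N \<and> U * adj U = 1\<^sub>m N \<and> adj U * U = 1\<^sub>m N"

definition onb :: "nat \<Rightarrow> (nat \<Rightarrow> complex vec) \<Rightarrow> bool" where
  "onb N v \<longleftrightarrow> (\<forall>i<N. dim_vec (v i) = N) \<and>
     (\<forall>i<N. \<forall>j<N. cinner (v i) (v j) = (if i = j then 1 else 0))"

definition spec_sum :: "nat \<Rightarrow> (nat \<Rightarrow> real) \<Rightarrow> (nat \<Rightarrow> complex vec) \<Rightarrow> complex mat" where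
  "spec_sum N c v = mat N N (\<lambda>(i,j). \<Sum>n<N. complex_of_real (c n) * (v n $ i) * cnj (v n $ j))"

(* tensor product of vectors, C^a (x) C^b = C^(a*b), index (i,k) |-> i*b + k *)
definition kron :: "complex vec \<Rightarrow> complex vec \<Rightarrow> complex vec" where
  "kron x y = vec (dim_vec x * dim_vec y) (\<lambda>i. x $ (i div dim_vec y) * y $ (i mod dim_vec y))"

definition mtrace :: "complex mat \<Rightarrow> complex" where
  "mtrace A = (\<Sum>i<dim_row A. A $$ (i,i))"

definition exp_mat :: "complex mat \<Rightarrow> complex mat" where
  "exp_mat A = mat (dim_row A) (dim_col A) (\<lambda>(i,j). \<Sum>k. (A ^\<^sub>m k) $$ (i,j) / of_nat (fact k))"

definition gibbs :: "real \<Rightarrow> complex mat \<Rightarrow> complex mat" where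
  "gibbs \<beta> H = (1 / mtrace (exp_mat ((- complex_of_real \<beta>) \<cdot>\<^sub>m H))) \<cdot>\<^sub>m exp_mat ((- complex_of_real \<beta>) \<cdot>\<^sub>m H)"

definition decr :: "real list \<Rightarrow> real list" where
  "decr a = rev (sort a)"

definition majorized :: "real list \<Rightarrow> real list \<Rightarrow> bool" where
  "majorized a b \<longleftrightarrow> length a = length b \<and>
     (\<forall>k\<le>length a. sum_list (take k (decr a)) \<le> sum_list (take k (decr b))) \<and>
     sum_list a = sum_list b"

definition Umaj :: "nat \<Rightarrow> nat \<Rightarrow> (nat \<Rightarrow> complex vec) \<Rightarrow> complex vec \<Rightarrow> complex mat set" where
  "Umaj dO dK xi Psi = {U. unitary (dO * dK) U \<and>
     (\<exists>phi. onb dK phi \<and> (\<forall>n<dK. U *\<^sub>v xi n = kron Psi (phi n)))}"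

definition DeltaQ :: "complex mat \<Rightarrow> complex mat \<Rightarrow> complex mat \<Rightarrow> complex" where
  "DeltaQ H \<rho> U = mtrace (H * (U * \<rho> * adj U - \<rho>))"

definition qvec :: "nat \<Rightarrow> (nat \<Rightarrow> real) \<Rightarrow> (nat \<Rightarrow> complex vec) \<Rightarrow> complex mat \<Rightarrow> real list" where
  "qvec N p xi U = map (\<lambda>n. \<Sum>m<N. p m * (cmod (cinner (xi n) (U *\<^sub>v xi m)))\<^sup>2) [0..<N]"

end

theory Submission
  imports Defs "HOL-Library.Multiset"
begin

text \<open>Since \<open>H\<close> and \<open>\<rho>\<close> are diagonal in the basis \<open>\<xi>\<close>, one has
  \<open>\<Delta>Q(U) = \<Sum>\<^sub>n \<lambda>\<^sub>n q\<^sub>n\<^sup>U - tr[H\<rho>]\<close>.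
  Majorization \<open>(q\<^sup>U)\<^sup>\<down> \<prec> q\<^sup>U\<^sup>1\<close> bounds every partial sum of \<open>q\<^sup>U\<close> by the
  corresponding partial sum of \<open>q\<^sup>U\<^sup>1\<close>, with equal totals, so Abel summation against the
  non-decreasing energies \<open>\<lambda>\<^sub>n\<close> gives \<open>\<Sum>\<^sub>n \<lambda>\<^sub>n q\<^sub>n\<^sup>U\<^sup>1 \<le> \<Sum>\<^sub>n \<lambda>\<^sub>n q\<^sub>n\<^sup>U\<close>.\<close>

fun insort_desc :: "real \<Rightarrow> real list \<Rightarrow> real list" where
  "insort_desc x [] = [x]"
| "insort_desc x (y # ys) = (if y \<le> x then x # y # ys else y # insort_desc x ys)"

lemma mset_insort_desc: "mset (insort_desc x ys) = add_mset x (mset ys)"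
  by (induction ys) auto

lemma set_insort_desc: "set (insort_desc x ys) = insert x (set ys)"
  by (induction ys) auto

lemma sorted_insort_desc: "sorted_wrt (\<ge>) ys \<Longrightarrow> sorted_wrt (\<ge>) (insort_desc x ys)"
  by (induction ys) (auto simp: set_insort_desc)

lemma sum_take_insort_desc_ge:
  "x + sum_list (take k ys) \<le> sum_list (take (Suc k) (insort_desc x ys))"
proof (induction ys arbitrary: k)
  case Nil
  then show ?case by simp
next
  case (Cons y ys)
  show ?case
  proof (cases "y \<le> x")
    case False
    then show ?thesis
      using Cons.IH[of "k - 1"] by (cases k) auto
  qed (cases k; auto)
qed

text \<open>Descending insertion sort: a presentation of \<^const>\<open>decr\<close> whose prefix sums can be
  handled by structural induction.\<close>

definition sort_desc :: "real list \<Rightarrow> real list" where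
  "sort_desc xs = foldr insort_desc xs []"

lemma mset_sort_desc: "mset (sort_desc xs) = mset xs"
  unfolding sort_desc_def by (induction xs) (auto simp: mset_insort_desc)

lemma sorted_sort_desc: "sorted_wrt (\<ge>) (sort_desc xs)"
  unfolding sort_desc_def by (induction xs) (auto simp: sorted_insort_desc)

lemma decr_eq_if_sorted:
  assumes "mset ys = mset xs" and "sorted_wrt (\<ge>) ys"
  shows "decr xs = ys"
proof -
  have "sort xs = rev ys"
    by (rule properties_for_sort) (use assms in \<open>auto simp: sorted_wrt_rev\<close>)
  then show ?thesis by (simp add: decr_def)
qed

lemma decr_eq_sort_desc: "decr xs = sort_desc xs"
  by (rule decr_eq_if_sorted[OF mset_sort_desc sorted_sort_desc])

lemma sum_take_le_sum_take_decr: "sum_list (take k xs) \<le> sum_list (take k (decr xs))"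
  unfolding decr_eq_sort_desc
proof (induction xs arbitrary: k)
  case Nil
  then show ?case by (simp add: sort_desc_def)
next
  case (Cons x xs)
  show ?case
  proof (cases k)
    case (Suc j)
    have "sum_list (take k (x # xs)) \<le> x + sum_list (take j (sort_desc xs))"
      using Cons.IH[of j] Suc by simp
    also have "\<dots> \<le> sum_list (take k (insort_desc x (sort_desc xs)))"
      using sum_take_insort_desc_ge Suc by simp
    finally show ?thesis by (simp add: sort_desc_def)
  qed simp
qed

lemma sum_list_take_eq_sum_nth: "k \<le> length xs \<Longrightarrow> sum_list (take k xs) = (\<Sum>n<k. xs ! n)"
  by (simp add: sum_list_sum_nth atLeast0LessThan min_def)

lemma weighted_sum_ge_of_nonpos_partial_sums:
  fixes lam x :: "nat \<Rightarrow> real"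
  assumes mono: "\<And>n m. n \<le> m \<Longrightarrow> m < N \<Longrightarrow> lam n \<le> lam m"
    and nonpos: "\<And>k. k \<le> N \<Longrightarrow> (\<Sum>n<k. x n) \<le> 0"
    and "k \<le> N" and "\<forall>n<k. lam n \<le> \<mu>"
  shows "\<mu> * (\<Sum>n<k. x n) \<le> (\<Sum>n<k. lam n * x n)"
  using assms(3,4)
proof (induction k arbitrary: \<mu>)
  case 0
  then show ?case by simp
next
  case (Suc k)
  have "\<mu> * (\<Sum>n<Suc k. x n) \<le> lam k * (\<Sum>n<Suc k. x n)"
    using nonpos[of "Suc k"] Suc.prems by (intro mult_right_mono_neg) auto
  also have "\<dots> = lam k * (\<Sum>n<k. x n) + lam k * x k"
    by (simp add: algebra_simps)
  also have "\<dots> \<le> (\<Sum>n<Suc k. lam n * x n)"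
    using Suc.IH[of "lam k"] Suc.prems mono by auto
  finally show ?case .
qed

lemma weighted_sum_le_of_partial_sums_le:
  fixes lam a b :: "nat \<Rightarrow> real"
  assumes mono: "\<And>n m. n \<le> m \<Longrightarrow> m < N \<Longrightarrow> lam n \<le> lam m"
    and partial: "\<And>k. k \<le> N \<Longrightarrow> (\<Sum>n<k. a n) \<le> (\<Sum>n<k. b n)"
    and total: "(\<Sum>n<N. a n) = (\<Sum>n<N. b n)"
  shows "(\<Sum>n<N. lam n * b n) \<le> (\<Sum>n<N. lam n * a n)"
proof -
  have "lam (N - 1) * (\<Sum>n<N. a n - b n) \<le> (\<Sum>n<N. lam n * (a n - b n))"
    using mono partial mono[of _ "N - 1"]
    by (intro weighted_sum_ge_of_nonpos_partial_sums[of N lam]) (auto simp: sum_subtractf)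
  then show ?thesis
    using total by (simp add: sum_subtractf algebra_simps)
qed

lemma weighted_sum_le_if_majorized:
  fixes lam :: "nat \<Rightarrow> real"
  assumes mono: "\<And>n m. n \<le> m \<Longrightarrow> m < N \<Longrightarrow> lam n \<le> lam m"
    and len: "length a = N"
    and sorted: "sorted_wrt (\<ge>) b"
    and maj: "majorized a b"
  shows "(\<Sum>n<N. lam n * b ! n) \<le> (\<Sum>n<N. lam n * a ! n)"
proof -
  have len_b: "length b = N" and decr_b: "decr b = b"
    using maj len decr_eq_if_sorted[OF refl sorted] by (auto simp: majorized_def)
  show ?thesis
  proof (rule weighted_sum_le_of_partial_sums_le[OF mono])
    fix k assume k: "k \<le> N"
    have "sum_list (take k a) \<le> sum_list (take k (decr a))"
      by (rule sum_take_le_sum_take_decr)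
    also have "\<dots> \<le> sum_list (take k b)"
      using maj k len decr_b by (simp add: majorized_def)
    finally show "(\<Sum>n<k. a ! n) \<le> (\<Sum>n<k. b ! n)"
      using k len len_b by (simp add: sum_list_take_eq_sum_nth)
  next
    show "(\<Sum>n<N. a ! n) = (\<Sum>n<N. b ! n)"
      using maj len len_b sum_list_take_eq_sum_nth[of N a] sum_list_take_eq_sum_nth[of N b]
      by (simp add: majorized_def)
  qed
qed

lemma cinner_commute_cnj: "dim_vec x = dim_vec y \<Longrightarrow> cinner x y = cnj (cinner y x)"
  by (simp add: cinner_def mult.commute)

lemma cinner_mult_mat_vec:
  assumes A: "A \<in> carrier_mat N N" and x: "dim_vec x = N" and y: "dim_vec y = N"
  shows "cinner x (A *\<^sub>v y) = cinner (adj A *\<^sub>v x) y"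
proof -
  have "cinner x (A *\<^sub>v y) = (\<Sum>i<N. cnj (x $ i) * (\<Sum>j<N. A $$ (i,j) * y $ j))"
    using A x y by (simp add: cinner_def scalar_prod_def atLeast0LessThan)
  also have "\<dots> = (\<Sum>j<N. (\<Sum>i<N. A $$ (i,j) * cnj (x $ i)) * y $ j)"
    by (simp add: sum_distrib_left sum_distrib_right) (subst sum.swap, simp add: mult_ac)
  also have "\<dots> = cinner (adj A *\<^sub>v x) y"
    using A x y by (simp add: cinner_def adj_def scalar_prod_def atLeast0LessThan cnj_sum mult_ac)
  finally show ?thesis .
qed

lemma cmod_cinner_adj:
  assumes "A \<in> carrier_mat N N" and "dim_vec x = N" and "dim_vec y = N"
  shows "cmod (cinner x (adj A *\<^sub>v y)) = cmod (cinner y (A *\<^sub>v x))"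
proof -
  have "dim_vec (adj A *\<^sub>v y) = N"
    using assms by (simp add: adj_def)
  then have "cinner y (A *\<^sub>v x) = cnj (cinner x (adj A *\<^sub>v y))"
    using assms by (simp add: cinner_mult_mat_vec[of A N y x] cinner_commute_cnj[of _ x])
  then show ?thesis by simp
qed

lemma mtrace_spec_sum_mult:
  assumes M: "M \<in> carrier_mat N N" and v: "\<And>n. n < N \<Longrightarrow> dim_vec (v n) = N"
  shows "mtrace (spec_sum N c v * M) = (\<Sum>n<N. complex_of_real (c n) * cinner (v n) (M *\<^sub>v v n))"
proof -
  have "mtrace (spec_sum N c v * M) =
     (\<Sum>i<N. \<Sum>j<N. (\<Sum>n<N. complex_of_real (c n) * (v n $ i) * cnj (v n $ j)) * M $$ (j,i))"
    using M by (simp add: mtrace_def spec_sum_def scalar_prod_def atLeast0LessThan)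
  also have "\<dots> = (\<Sum>i<N. \<Sum>j<N. \<Sum>n<N. complex_of_real (c n) * (cnj (v n $ j) * (M $$ (j,i) * v n $ i)))"
    by (simp add: sum_distrib_right sum_distrib_left mult_ac)
  also have "\<dots> = (\<Sum>n<N. \<Sum>j<N. \<Sum>i<N. complex_of_real (c n) * (cnj (v n $ j) * (M $$ (j,i) * v n $ i)))"
    by (subst sum.swap, subst (2) sum.swap, subst sum.swap) (rule refl)
  also have "\<dots> = (\<Sum>n<N. complex_of_real (c n) * cinner (v n) (M *\<^sub>v v n))"
    using M v by (intro sum.cong refl)
      (simp add: cinner_def scalar_prod_def atLeast0LessThan sum_distrib_left)
  finally show ?thesis .
qed

lemma cinner_spec_sum:
  assumes w: "dim_vec w = N" and v: "\<And>n. n < N \<Longrightarrow> dim_vec (v n) = N"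
  shows "cinner w (spec_sum N c v *\<^sub>v w) = complex_of_real (\<Sum>m<N. c m * (cmod (cinner (v m) w))\<^sup>2)"
proof -
  have "cinner w (spec_sum N c v *\<^sub>v w) =
      (\<Sum>i<N. cnj (w $ i) * (\<Sum>j<N. (\<Sum>m<N. complex_of_real (c m) * (v m $ i) * cnj (v m $ j)) * w $ j))"
    using w by (simp add: cinner_def spec_sum_def scalar_prod_def atLeast0LessThan)
  also have "\<dots> = (\<Sum>i<N. \<Sum>j<N. \<Sum>m<N. complex_of_real (c m) * ((v m $ i * cnj (w $ i)) * (cnj (v m $ j) * w $ j)))"
    by (simp add: sum_distrib_right sum_distrib_left mult_ac)
  also have "\<dots> = (\<Sum>m<N. \<Sum>i<N. \<Sum>j<N. complex_of_real (c m) * ((v m $ i * cnj (w $ i)) * (cnj (v m $ j) * w $ j)))"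
    by (subst sum.swap, subst (2) sum.swap) (rule refl)
  also have "\<dots> = (\<Sum>m<N. complex_of_real (c m) * ((\<Sum>i<N. v m $ i * cnj (w $ i)) * (\<Sum>j<N. cnj (v m $ j) * w $ j)))"
    unfolding sum_product by (simp only: sum_distrib_left)
  also have "\<dots> = (\<Sum>m<N. complex_of_real (c m) * (cnj (cinner (v m) w) * cinner (v m) w))"
    using w v by (intro sum.cong refl) (simp add: cinner_def cnj_sum)
  also have "\<dots> = (\<Sum>m<N. complex_of_real (c m * (cmod (cinner (v m) w))\<^sup>2))"
    by (intro sum.cong refl) (simp add: complex_norm_square[symmetric] mult.commute)
  finally show ?thesis by simp
qed

lemma cinner_conj_spec_sum:
  assumes U: "U \<in> carrier_mat N N" and v: "\<And>n. n < N \<Longrightarrow> dim_vec (v n) = N"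
    and x: "dim_vec x = N"
  shows "cinner x ((U * spec_sum N c v * adj U) *\<^sub>v x)
     = complex_of_real (\<Sum>m<N. c m * (cmod (cinner x (U *\<^sub>v v m)))\<^sup>2)"
proof -
  let ?S = "spec_sum N c v" and ?w = "adj U *\<^sub>v x"
  have S: "?S \<in> carrier_mat N N" and adj_U: "adj U \<in> carrier_mat N N"
    using U by (auto simp: spec_sum_def adj_def)
  have w: "?w \<in> carrier_vec N" and x': "x \<in> carrier_vec N"
    using adj_U x by auto
  have "(U * ?S * adj U) *\<^sub>v x = U *\<^sub>v (?S *\<^sub>v ?w)"
    using U S adj_U x' by (simp add: assoc_mult_mat_vec[of _ N N _ N])
  then have "cinner x ((U * ?S * adj U) *\<^sub>v x) = cinner ?w (?S *\<^sub>v ?w)"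
    using cinner_mult_mat_vec[OF U x, of "?S *\<^sub>v ?w"] S by simp
  also have "\<dots> = complex_of_real (\<Sum>m<N. c m * (cmod (cinner (v m) ?w))\<^sup>2)"
    using adj_U x v by (intro cinner_spec_sum) auto
  also have "\<dots> = complex_of_real (\<Sum>m<N. c m * (cmod (cinner x (U *\<^sub>v v m)))\<^sup>2)"
    using cmod_cinner_adj[OF U v x] by simp
  finally show ?thesis .
qed

lemma Re_DeltaQ_spec_sum:
  assumes U: "U \<in> carrier_mat N N" and xi: "\<And>n. n < N \<Longrightarrow> dim_vec (xi n) = N"
  shows "Re (DeltaQ (spec_sum N lam xi) (spec_sum N p xi) U)
    = (\<Sum>n<N. lam n * qvec N p xi U ! n) - Re (mtrace (spec_sum N lam xi * spec_sum N p xi))"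
proof -
  let ?\<rho> = "spec_sum N p xi" and ?H = "spec_sum N lam xi"
  have mats: "?\<rho> \<in> carrier_mat N N" "?H \<in> carrier_mat N N" "U * ?\<rho> * adj U \<in> carrier_mat N N"
    using U by (auto simp: spec_sum_def adj_def)
  have "DeltaQ ?H ?\<rho> U = mtrace (?H * (U * ?\<rho> * adj U)) - mtrace (?H * ?\<rho>)"
    using mats by (simp add: DeltaQ_def mult_minus_distrib_mat[of _ N N] mtrace_def sum_subtractf)
  moreover have "mtrace (?H * (U * ?\<rho> * adj U)) = complex_of_real (\<Sum>n<N. lam n * qvec N p xi U ! n)"
    using mats xi by (simp add: mtrace_spec_sum_mult cinner_conj_spec_sum[OF U xi] qvec_def)
  ultimately show ?thesis by simp
qed

theorem proposition1:
  fixes dO dK :: nat and lam :: "nat \<Rightarrow> real" and xi :: "nat \<Rightarrow> complex vec"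
    and H \<rho> U1 :: "complex mat" and \<beta> :: real and p :: "nat \<Rightarrow> real" and Psi :: "complex vec"
  assumes "dO > 0" and "dK > 0"
    and "onb (dO * dK) xi"
    and "\<And>n m. n \<le> m \<Longrightarrow> m < dO * dK \<Longrightarrow> lam n \<le> lam m"
    and "H = spec_sum (dO * dK) lam xi"
    and "\<beta> > 0"
    and "\<rho> = gibbs \<beta> H"
    and "\<rho> = spec_sum (dO * dK) p xi"
    and "dim_vec Psi = dO" and "cinner Psi Psi = 1"
    and "U1 \<in> Umaj dO dK xi Psi"
    and "sorted_wrt (\<ge>) (qvec (dO * dK) p xi U1)"
    and "\<And>U. U \<in> Umaj dO dK xi Psi \<Longrightarrow> majorized (qvec (dO * dK) p xi U) (qvec (dO * dK) p xi U1)"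
  shows "\<forall>U \<in> Umaj dO dK xi Psi. Re (DeltaQ H \<rho> U1) \<le> Re (DeltaQ H \<rho> U)"
proof
  let ?N = "dO * dK"
  fix U assume U: "U \<in> Umaj dO dK xi Psi"
  have xi: "\<And>n. n < ?N \<Longrightarrow> dim_vec (xi n) = ?N"
    using assms(3) by (simp add: onb_def)
  have carrier: "U \<in> carrier_mat ?N ?N" "U1 \<in> carrier_mat ?N ?N"
    using U assms(11) by (simp_all add: Umaj_def unitary_def)
  have len: "length (qvec ?N p xi U) = ?N"
    by (simp add: qvec_def)
  have "(\<Sum>n<?N. lam n * qvec ?N p xi U1 ! n) \<le> (\<Sum>n<?N. lam n * qvec ?N p xi U ! n)"
    by (rule weighted_sum_le_if_majorized[OF assms(4) len assms(12) assms(13)[OF U]])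
  then show "Re (DeltaQ H \<rho> U1) \<le> Re (DeltaQ H \<rho> U)"
    using Re_DeltaQ_spec_sum[OF carrier(1) xi] Re_DeltaQ_spec_sum[OF carrier(2) xi] assms(5,8)
    by simp
qed

end
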